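(* Let $R$ be a ring and $n\ge 1$ an integer, and let $R_n$ be the subring of $n\times n$ upper triangular matrices over $R$ whose diagonal entries are all equal, i.e. matrices $(a_{ij})$ with $a_{ij}=0$ for $i>j$, $a_{11}=a_{22}=\dots=a_{nn}$, and arbitrary $a_{ij}\in R$ for $i<j$. Then $R$ is NJ-symmetric if and only if $R_n$ is NJ-symmetric.
   Context: Rings are associative with identity. $N(S)$ is the set of nilpotent elements, $J(S)$ the Jacobson radical of a ring $S$. $S$ is NJ-symmetric if for all $a,b,c\in S$, $abc\in N(S)$ implies $bac\in J(S)$. *)

theory Defs
  imports "HOL-Algebra.Algebra"
begin

definition nilpotents :: "('a, 'b) ring_scheme \<Rightarrow> 'a set" where
  "nilpotents S = {a \<in> carrier S. \<exists>k::nat. a [^]\<^bsub>S\<^esub> k = \<zero>\<^bsub>S\<^esub>}"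

definition left_ideal :: "'a set \<Rightarrow> ('a, 'b) ring_scheme \<Rightarrow> bool" where
  "left_ideal I S \<longleftrightarrow> additive_subgroup I S \<and>
     (\<forall>x\<in>carrier S. \<forall>a\<in>I. x \<otimes>\<^bsub>S\<^esub> a \<in> I)"

definition maximal_left_ideal :: "'a set \<Rightarrow> ('a, 'b) ring_scheme \<Rightarrow> bool" where
  "maximal_left_ideal I S \<longleftrightarrow> left_ideal I S \<and> I \<noteq> carrier S \<and>
     (\<forall>J. left_ideal J S \<and> I \<subseteq> J \<longrightarrow> J = I \<or> J = carrier S)"

text \<open>Jacobson radical J(S): intersection of all maximal left ideals
  (equal to the whole ring if there are none, i.e. for the zero ring).\<close>
definition jacobson_radical :: "('a, 'b) ring_scheme \<Rightarrow> 'a set" where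
  "jacobson_radical S = carrier S \<inter> \<Inter> {I. maximal_left_ideal I S}"

definition NJ_symmetric :: "('a, 'b) ring_scheme \<Rightarrow> bool" where
  "NJ_symmetric S \<longleftrightarrow> (\<forall>a\<in>carrier S. \<forall>b\<in>carrier S. \<forall>c\<in>carrier S.
     a \<otimes>\<^bsub>S\<^esub> b \<otimes>\<^bsub>S\<^esub> c \<in> nilpotents S \<longrightarrow>
     b \<otimes>\<^bsub>S\<^esub> a \<otimes>\<^bsub>S\<^esub> c \<in> jacobson_radical S)"

text \<open>Matrices are functions nat => nat => 'a, indices 0..n-1,
  with entries outside the n x n block fixed to zero.\<close>
definition Rn :: "('a, 'b) ring_scheme \<Rightarrow> nat \<Rightarrow> (nat \<Rightarrow> nat \<Rightarrow> 'a) ring" where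
  "Rn R n = \<lparr>carrier = {A. (\<forall>i<n. \<forall>j<n. A i j \<in> carrier R)
                          \<and> (\<forall>i j. \<not> (i < n \<and> j < n) \<longrightarrow> A i j = \<zero>\<^bsub>R\<^esub>)
                          \<and> (\<forall>i j. j < i \<longrightarrow> A i j = \<zero>\<^bsub>R\<^esub>)
                          \<and> (\<forall>i<n. A i i = A 0 0)},
     monoid.mult = (\<lambda>A B i j. if i < n \<and> j < n
                        then (\<Oplus>\<^bsub>R\<^esub> k\<in>{..<n}. A i k \<otimes>\<^bsub>R\<^esub> B k j) else \<zero>\<^bsub>R\<^esub>),
     monoid.one = (\<lambda>i j. if i < n \<and> j < n \<and> i = j then \<one>\<^bsub>R\<^esub> else \<zero>\<^bsub>R\<^esub>),
     ring.zero = (\<lambda>i j. \<zero>\<^bsub>R\<^esub>),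
     ring.add = (\<lambda>A B i j. if i < n \<and> j < n then A i j \<oplus>\<^bsub>R\<^esub> B i j else \<zero>\<^bsub>R\<^esub>)\<rparr>"

end

theory Submission
  imports Defs
begin

text \<open>Taking the common diagonal entry, \<open>A \<mapsto> A 0 0\<close>, is a surjective ring homomorphism
  from \<open>R\<^sub>n\<close> onto \<open>R\<close> whose kernel, the strictly upper triangular matrices, is nil.
  A nil left ideal lies in every maximal left ideal, because \<open>1 - k\<close> is left invertible
  for nilpotent \<open>k\<close>. Hence for a surjective homomorphism with nil kernel, image and
  preimage match up the maximal left ideals, so the homomorphism both preserves and
  reflects nilpotency and membership in the Jacobson radical; NJ-symmetry, which is
  phrased through these two sets only, therefore passes along it in both directions.\<close>

section \<open>Nil left ideals and the Jacobson radical\<close>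

lemma left_ideal_additive_subgroup: "left_ideal I R \<Longrightarrow> additive_subgroup I R"
  by (simp add: left_ideal_def)

lemma left_ideal_subset: "left_ideal I R \<Longrightarrow> I \<subseteq> carrier R"
  by (simp add: left_ideal_def additive_subgroup.a_subset)

lemma left_ideal_zero: "left_ideal I R \<Longrightarrow> \<zero>\<^bsub>R\<^esub> \<in> I"
  by (simp add: left_ideal_def additive_subgroup.zero_closed)

lemma left_ideal_l_closed:
  "left_ideal I R \<Longrightarrow> x \<in> carrier R \<Longrightarrow> a \<in> I \<Longrightarrow> x \<otimes>\<^bsub>R\<^esub> a \<in> I"
  by (simp add: left_ideal_def)

lemma ideal_imp_left_ideal: "ideal I R \<Longrightarrow> left_ideal I R"
  by (simp add: left_ideal_def ideal.axioms(1) ideal.I_l_closed)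

lemma maximal_left_idealI:
  assumes "left_ideal I R" "I \<noteq> carrier R"
    "\<And>J. left_ideal J R \<Longrightarrow> I \<subseteq> J \<Longrightarrow> J = I \<or> J = carrier R"
  shows "maximal_left_ideal I R"
  using assms by (simp add: maximal_left_ideal_def)

lemma (in ring) left_ideal_one_imp_carrier:
  assumes "left_ideal I R" "\<one> \<in> I"
  shows "I = carrier R"
proof
  show "carrier R \<subseteq> I"
    using left_ideal_l_closed[OF assms(1) _ assms(2)] by (metis r_one subsetI)
qed (rule left_ideal_subset[OF assms(1)])

lemma (in ring) left_ideal_set_add:
  assumes I: "left_ideal I R" and J: "left_ideal J R"
  shows "left_ideal (set_add R I J) R"
  unfolding left_ideal_def
proof (intro conjI ballI)
  show "additive_subgroup (set_add R I J) R"
    by (rule add_additive_subgroups[OF left_ideal_additive_subgroup[OF I] left_ideal_additive_subgroup[OF J]])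
  fix x s assume x: "x \<in> carrier R" and "s \<in> set_add R I J"
  then obtain a b where ab: "a \<in> I" "b \<in> J" "s = a \<oplus> b" by (auto simp: set_add_def')
  have "x \<otimes> s = x \<otimes> a \<oplus> x \<otimes> b"
    using ab x left_ideal_subset[OF I] left_ideal_subset[OF J] by (auto intro: r_distr)
  moreover have "x \<otimes> a \<in> I" "x \<otimes> b \<in> J" using ab x I J by (auto intro: left_ideal_l_closed)
  ultimately show "x \<otimes> s \<in> set_add R I J" by (auto simp: set_add_def')
qed

lemma (in ring) one_minus_nilpotent_left_invertible:
  assumes k: "k \<in> nilpotents R"
  shows "\<exists>u\<in>carrier R. u \<otimes> (\<one> \<ominus> k) = \<one>"
proof -
  obtain N :: nat where k_carrier: "k \<in> carrier R" and "k [^] N = \<zero>"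
    using k by (auto simp: nilpotents_def)
  have geometric: "\<exists>u\<in>carrier R. u \<otimes> (\<one> \<ominus> k) = \<one> \<ominus> k [^] m" for m :: nat
  proof (induction m)
    case 0
    show ?case by (rule bexI[of _ \<zero>]) (use k_carrier in \<open>simp_all add: a_minus_def r_neg\<close>)
  next
    case (Suc m)
    then obtain u where u: "u \<in> carrier R" "u \<otimes> (\<one> \<ominus> k) = \<one> \<ominus> k [^] m" by blast
    have "(u \<oplus> k [^] m) \<otimes> (\<one> \<ominus> k) = u \<otimes> (\<one> \<ominus> k) \<oplus> k [^] m \<otimes> (\<one> \<ominus> k)"
      using k_carrier u by (simp add: l_distr)
    also have "\<dots> = (\<one> \<ominus> k [^] m) \<oplus> (k [^] m \<ominus> k [^] m \<otimes> k)"
      using k_carrier u by (simp add: r_distr a_minus_def r_minus)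
    also have "\<dots> = \<one> \<ominus> k [^] Suc m"
      using k_carrier by (simp add: a_minus_def a_assoc r_neg1)
    finally show ?case using k_carrier u by (intro bexI[of _ "u \<oplus> k [^] m"]) auto
  qed
  show ?thesis using geometric[of N] \<open>k [^] N = \<zero>\<close> by (simp add: a_minus_def)
qed

lemma (in ring) nil_left_ideal_subset_jacobson_radical:
  assumes I: "left_ideal I R" and nil: "I \<subseteq> nilpotents R"
  shows "I \<subseteq> jacobson_radical R"
proof
  fix x assume x: "x \<in> I"
  have I_sub: "I \<subseteq> carrier R" using I by (rule left_ideal_subset)
  have "x \<in> M" if M: "maximal_left_ideal M R" for M
  proof (rule ccontr)
    assume "x \<notin> M"
    have M_ideal: "left_ideal M R" and M_proper: "M \<noteq> carrier R"
      using M by (auto simp: maximal_left_ideal_def)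
    have M_sub: "M \<subseteq> carrier R" using M_ideal by (rule left_ideal_subset)
    have "M \<subseteq> set_add R M I" "x \<in> set_add R M I"
      using M_sub I_sub x left_ideal_zero[OF I] left_ideal_zero[OF M_ideal]
      by (force simp: set_add_def')+
    then have "set_add R M I = carrier R"
      using M left_ideal_set_add[OF M_ideal I] \<open>x \<notin> M\<close> unfolding maximal_left_ideal_def by blast
    then obtain m k where mk: "m \<in> M" "k \<in> I" "\<one> = m \<oplus> k"
      using one_closed unfolding set_add_def' by blast
    have "k \<in> carrier R" "m \<in> carrier R" using mk I_sub M_sub by auto
    then have "\<one> \<ominus> k \<in> M" using mk by (simp add: a_minus_def a_assoc r_neg)
    moreover obtain u where "u \<in> carrier R" "u \<otimes> (\<one> \<ominus> k) = \<one>"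
      using one_minus_nilpotent_left_invertible mk(2) nil by blast
    ultimately have "\<one> \<in> M" using left_ideal_l_closed[OF M_ideal] by metis
    then show False using left_ideal_one_imp_carrier[OF M_ideal] M_proper by blast
  qed
  then show "x \<in> jacobson_radical R"
    using x I_sub by (auto simp: jacobson_radical_def)
qed

section \<open>Surjective homomorphisms with nil kernel\<close>

lemma (in ring_hom_ring) hom_nilpotent:
  assumes "x \<in> nilpotents R"
  shows "h x \<in> nilpotents S"
proof -
  obtain k :: nat where x: "x \<in> carrier R" and "x [^] k = \<zero>"
    using assms by (auto simp: nilpotents_def)
  then have "h x [^]\<^bsub>S\<^esub> k = \<zero>\<^bsub>S\<^esub>" by (simp add: hom_nat_pow[symmetric])
  then show ?thesis using x by (auto simp: nilpotents_def)
qed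

lemma (in ring_hom_ring) nilpotent_of_hom_nilpotent:
  assumes nil_kernel: "a_kernel R S h \<subseteq> nilpotents R"
    and x: "x \<in> carrier R" and hx: "h x \<in> nilpotents S"
  shows "x \<in> nilpotents R"
proof -
  obtain k :: nat where "h x [^]\<^bsub>S\<^esub> k = \<zero>\<^bsub>S\<^esub>"
    using hx unfolding nilpotents_def by blast
  then have "x [^] k \<in> a_kernel R S h"
    unfolding a_kernel_def' using hom_nat_pow[OF x, of k] x by simp
  then obtain j :: nat where "(x [^] k) [^] j = \<zero>"
    using nil_kernel unfolding nilpotents_def by blast
  then have "x [^] (k * j) = \<zero>" by (simp add: R.nat_pow_pow[OF x])
  then show ?thesis unfolding nilpotents_def using x by blast
qed

lemma (in ring_hom_ring) left_ideal_vimage: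
  assumes I: "left_ideal I S"
  shows "left_ideal {x \<in> carrier R. h x \<in> I} R"
  unfolding left_ideal_def
proof (intro conjI ballI)
  note I_subgroup = left_ideal_additive_subgroup[OF I]
  show "additive_subgroup {x \<in> carrier R. h x \<in> I} R"
    by (rule additive_subgroupI, rule R.add.subgroupI)
      (use I_subgroup left_ideal_zero[OF I] in \<open>auto simp: additive_subgroup.a_closed additive_subgroup.a_inv_closed\<close>)
qed (use I in \<open>auto intro: left_ideal_l_closed\<close>)

lemma (in ring_hom_ring) vimage_image_left_ideal:
  assumes L: "left_ideal L R" and kernel: "a_kernel R S h \<subseteq> L"
  shows "{x \<in> carrier R. h x \<in> h ` L} = L"
proof (intro equalityI subsetI)
  fix x assume "x \<in> {x \<in> carrier R. h x \<in> h ` L}"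
  then obtain y where x: "x \<in> carrier R" and y: "y \<in> L" "h x = h y" by auto
  have y_carrier: "y \<in> carrier R" using y(1) left_ideal_subset[OF L] by blast
  have "h (x \<ominus> y) = \<zero>\<^bsub>S\<^esub>"
    using x y_carrier y(2) by (simp add: a_minus_def S.r_neg)
  then have "x \<ominus> y \<in> L"
    using kernel x y_carrier unfolding a_kernel_def' by auto
  then have "(x \<ominus> y) \<oplus> y \<in> L"
    using y(1) left_ideal_additive_subgroup[OF L] by (simp add: additive_subgroup.a_closed)
  then show "x \<in> L" using x y_carrier by (simp add: a_minus_def R.a_assoc R.l_neg)
qed (use left_ideal_subset[OF L] in auto)

locale surjective_ring_hom = ring_hom_ring +
  assumes surj: "h ` carrier R = carrier S"

lemma (in surjective_ring_hom) image_vimage_carrier: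
  assumes "I \<subseteq> carrier S"
  shows "h ` {x \<in> carrier R. h x \<in> I} = I"
proof (intro equalityI subsetI)
  fix y assume "y \<in> I"
  moreover obtain x where "x \<in> carrier R" "y = h x"
    using \<open>y \<in> I\<close> assms surj by (metis imageE subsetD)
  ultimately show "y \<in> h ` {x \<in> carrier R. h x \<in> I}" by (intro image_eqI[of y h x]) simp_all
qed auto

lemma (in surjective_ring_hom) left_ideal_image:
  assumes L: "left_ideal L R"
  shows "left_ideal (h ` L) S"
  unfolding left_ideal_def
proof (intro conjI ballI)
  show "additive_subgroup (h ` L) S"
    by (rule additive_subgroupI, rule group_hom.subgroup_img_is_subgroup[OF a_group_hom],
        rule additive_subgroup.a_subgroup[OF left_ideal_additive_subgroup[OF L]])
  fix r a assume r: "r \<in> carrier S" and a: "a \<in> h ` L"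
  obtain s where s: "s \<in> carrier R" "r = h s" using r surj by auto
  obtain x where x: "x \<in> L" "a = h x" using a by auto
  have "s \<otimes> x \<in> L" using s x by (simp add: left_ideal_l_closed[OF L])
  moreover have "r \<otimes>\<^bsub>S\<^esub> a = h (s \<otimes> x)"
    using s x left_ideal_subset[OF L] by (simp add: subsetD)
  ultimately show "r \<otimes>\<^bsub>S\<^esub> a \<in> h ` L" by (intro image_eqI)
qed

lemma (in surjective_ring_hom) maximal_left_ideal_vimage:
  assumes I: "maximal_left_ideal I S"
  shows "maximal_left_ideal {x \<in> carrier R. h x \<in> I} R"
proof -
  let ?P = "{x \<in> carrier R. h x \<in> I}"
  have I_ideal: "left_ideal I S" and I_proper: "I \<noteq> carrier S"
    and I_max: "\<And>J. left_ideal J S \<Longrightarrow> I \<subseteq> J \<Longrightarrow> J = I \<or> J = carrier S"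
    using I unfolding maximal_left_ideal_def by auto
  have "?P \<noteq> carrier R"
  proof
    assume "?P = carrier R"
    then have "\<one>\<^bsub>S\<^esub> \<in> I" using R.one_closed by force
    then show False using I_proper S.left_ideal_one_imp_carrier[OF I_ideal] by simp
  qed
  moreover have "J = ?P \<or> J = carrier R" if J: "left_ideal J R" and PJ: "?P \<subseteq> J" for J
  proof -
    have "a_kernel R S h \<subseteq> ?P"
      using left_ideal_zero[OF I_ideal] unfolding a_kernel_def' by auto
    then have kernel: "a_kernel R S h \<subseteq> J" using PJ by (rule subset_trans)
    have "I \<subseteq> h ` J"
      using image_mono[OF PJ, of h] unfolding image_vimage_carrier[OF left_ideal_subset[OF I_ideal]] .
    then have "h ` J = I \<or> h ` J = carrier S"
      by (rule I_max[OF left_ideal_image[OF J]])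
    moreover have "{x \<in> carrier R. h x \<in> carrier S} = carrier R" by auto
    ultimately show ?thesis
      using vimage_image_left_ideal[OF J kernel] by metis
  qed
  ultimately show ?thesis
    by (intro maximal_left_idealI left_ideal_vimage[OF I_ideal])
qed

lemma (in surjective_ring_hom) maximal_left_ideal_image:
  assumes M: "maximal_left_ideal M R" and kernel: "a_kernel R S h \<subseteq> M"
  shows "maximal_left_ideal (h ` M) S"
proof -
  have M_ideal: "left_ideal M R" and M_proper: "M \<noteq> carrier R"
    and M_max: "\<And>J. left_ideal J R \<Longrightarrow> M \<subseteq> J \<Longrightarrow> J = M \<or> J = carrier R"
    using M unfolding maximal_left_ideal_def by auto
  note M_eq = vimage_image_left_ideal[OF M_ideal kernel]
  have "h ` M \<noteq> carrier S"
  proof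
    assume "h ` M = carrier S"
    then have "M = carrier R" using M_eq by auto
    then show False using M_proper by blast
  qed
  moreover have "J = h ` M \<or> J = carrier S" if J: "left_ideal J S" and MJ: "h ` M \<subseteq> J" for J
  proof -
    have "M \<subseteq> {x \<in> carrier R. h x \<in> J}" using MJ M_eq by blast
    then have "{x \<in> carrier R. h x \<in> J} = M \<or> {x \<in> carrier R. h x \<in> J} = carrier R"
      using M_max left_ideal_vimage[OF J] by blast
    then show ?thesis
      using image_vimage_carrier[OF left_ideal_subset[OF J]] surj by auto
  qed
  ultimately show ?thesis
    by (intro maximal_left_idealI left_ideal_image[OF M_ideal])
qed

lemma (in surjective_ring_hom) hom_jacobson_radical:
  assumes "x \<in> jacobson_radical R"
  shows "h x \<in> jacobson_radical S"
  using assms maximal_left_ideal_vimage by (auto simp: jacobson_radical_def)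

lemma (in surjective_ring_hom) jacobson_radical_of_hom:
  assumes kernel: "a_kernel R S h \<subseteq> jacobson_radical R"
    and x: "x \<in> carrier R" and hx: "h x \<in> jacobson_radical S"
  shows "x \<in> jacobson_radical R"
proof -
  have "x \<in> M" if M: "maximal_left_ideal M R" for M
  proof -
    have M_kernel: "a_kernel R S h \<subseteq> M" using kernel M by (auto simp: jacobson_radical_def)
    have "h x \<in> h ` M" using hx maximal_left_ideal_image[OF M M_kernel] by (auto simp: jacobson_radical_def)
    then show ?thesis
      using x vimage_image_left_ideal[OF _ M_kernel] M by (auto simp: maximal_left_ideal_def)
  qed
  then show ?thesis using x by (auto simp: jacobson_radical_def)
qed

lemma (in surjective_ring_hom) NJ_symmetric_iff_of_nil_kernel:
  assumes nil_kernel: "a_kernel R S h \<subseteq> nilpotents R"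
  shows "NJ_symmetric R \<longleftrightarrow> NJ_symmetric S"
proof -
  have jacobson_kernel: "a_kernel R S h \<subseteq> jacobson_radical R"
    using R.nil_left_ideal_subset_jacobson_radical[OF ideal_imp_left_ideal[OF kernel_is_ideal] nil_kernel] .
  have nil_iff: "x \<in> nilpotents R \<longleftrightarrow> h x \<in> nilpotents S" if "x \<in> carrier R" for x
    using that hom_nilpotent nilpotent_of_hom_nilpotent[OF nil_kernel] by blast
  have jacobson_iff: "x \<in> jacobson_radical R \<longleftrightarrow> h x \<in> jacobson_radical S" if "x \<in> carrier R" for x
    using that hom_jacobson_radical jacobson_radical_of_hom[OF jacobson_kernel] by blast
  have "NJ_symmetric S \<longleftrightarrow> (\<forall>x\<in>carrier R. \<forall>y\<in>carrier R. \<forall>z\<in>carrier R.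
      h (x \<otimes> y \<otimes> z) \<in> nilpotents S \<longrightarrow> h (y \<otimes> x \<otimes> z) \<in> jacobson_radical S)"
    unfolding NJ_symmetric_def surj[symmetric] by simp
  also have "\<dots> \<longleftrightarrow> NJ_symmetric R"
    unfolding NJ_symmetric_def by (simp add: nil_iff jacobson_iff)
  finally show ?thesis ..
qed

section \<open>The ring of triangular matrices with constant diagonal\<close>

lemma (in abelian_monoid) finsum_eq_single:
  assumes "finite A" "i \<in> A" "\<And>k. k \<in> A \<Longrightarrow> k \<noteq> i \<Longrightarrow> f k = \<zero>" "f i \<in> carrier G"
  shows "finsum G f A = f i"
proof -
  have f: "f k \<in> carrier G" if "k \<in> A" for k
    using assms that by (cases "k = i") auto
  have "finsum G f A = (\<Oplus>k\<in>A. if i = k then f k else \<zero>)"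
    by (rule finsum_cong') (use assms f in auto)
  also have "\<dots> = f i"
    by (rule finsum_singleton) (use assms f in auto)
  finally show ?thesis .
qed

lemma (in abelian_monoid) finsum_swap:
  assumes "finite A" "finite B" "\<And>k l. f k l \<in> carrier G"
  shows "(\<Oplus>k\<in>A. \<Oplus>l\<in>B. f k l) = (\<Oplus>l\<in>B. \<Oplus>k\<in>A. f k l)"
  using assms(1)
proof (induction A rule: finite_induct)
  case empty
  then show ?case by (simp add: finsum_zero)
next
  case (insert x F)
  have "(\<Oplus>k\<in>insert x F. \<Oplus>l\<in>B. f k l) = (\<Oplus>l\<in>B. f x l) \<oplus> (\<Oplus>l\<in>B. \<Oplus>k\<in>F. f k l)"
    using insert assms by (simp add: finsum_insert Pi_def)
  also have "\<dots> = (\<Oplus>l\<in>B. f x l \<oplus> (\<Oplus>k\<in>F. f k l))"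
    using assms by (simp add: finsum_addf Pi_def)
  also have "\<dots> = (\<Oplus>l\<in>B. \<Oplus>k\<in>insert x F. f k l)"
    by (rule finsum_cong') (use insert assms in \<open>auto simp: finsum_insert Pi_def\<close>)
  finally show ?case .
qed

locale Rn_matrices = ring R for R (structure) + fixes n :: nat assumes n_pos: "0 < n"
begin

abbreviation S where "S \<equiv> Rn R n"

lemma Rn_carrier: "carrier S = {A. (\<forall>i<n. \<forall>j<n. A i j \<in> carrier R)
    \<and> (\<forall>i j. \<not> (i < n \<and> j < n) \<longrightarrow> A i j = \<zero>)
    \<and> (\<forall>i j. j < i \<longrightarrow> A i j = \<zero>) \<and> (\<forall>i<n. A i i = A 0 0)}"
  by (simp add: Rn_def)

lemma Rn_carrierD:
  assumes "A \<in> carrier S"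
  shows "A i j \<in> carrier R" "\<not> (i < n \<and> j < n) \<Longrightarrow> A i j = \<zero>" "j < i \<Longrightarrow> A i j = \<zero>"
proof -
  note A = assms[unfolded Rn_carrier, simplified]
  show "A i j \<in> carrier R"
    using A zero_closed by (cases "i < n \<and> j < n") metis+
  show "\<not> (i < n \<and> j < n) \<Longrightarrow> A i j = \<zero>" "j < i \<Longrightarrow> A i j = \<zero>"
    using A by blast+
qed

lemma Rn_diag:
  assumes "A \<in> carrier S" "i < n"
  shows "A i i = A 0 0"
  using assms unfolding Rn_carrier by blast

lemma Rn_carrierI:
  assumes "\<And>i j. A i j \<in> carrier R" "\<And>i j. \<not> (i < n \<and> j < n) \<Longrightarrow> A i j = \<zero>"
    "\<And>i j. j < i \<Longrightarrow> A i j = \<zero>" "\<And>i. i < n \<Longrightarrow> A i i = A 0 0"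
  shows "A \<in> carrier S"
  unfolding Rn_carrier using assms by blast

lemma Rn_zero: "\<zero>\<^bsub>S\<^esub> = (\<lambda>i j. \<zero>)"
  by (simp add: Rn_def)

lemma Rn_one: "\<one>\<^bsub>S\<^esub> = (\<lambda>i j. if i < n \<and> j < n \<and> i = j then \<one> else \<zero>)"
  by (simp add: Rn_def)

lemma Rn_add:
  assumes "A \<in> carrier S" "B \<in> carrier S"
  shows "A \<oplus>\<^bsub>S\<^esub> B = (\<lambda>i j. A i j \<oplus> B i j)"
  using Rn_carrierD[OF assms(1)] Rn_carrierD[OF assms(2)] by (auto simp: Rn_def fun_eq_iff)

lemma Rn_mult:
  assumes "A \<in> carrier S" "B \<in> carrier S"
  shows "A \<otimes>\<^bsub>S\<^esub> B = (\<lambda>i j. \<Oplus>k\<in>{..<n}. A i k \<otimes> B k j)"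
proof (intro ext)
  fix i j
  have "(\<Oplus>k\<in>{..<n}. A i k \<otimes> B k j) = \<zero>" if "\<not> (i < n \<and> j < n)"
    by (rule add.finprod_one_eqI) (use that Rn_carrierD[OF assms(1)] Rn_carrierD[OF assms(2)] in auto)
  then show "(A \<otimes>\<^bsub>S\<^esub> B) i j = (\<Oplus>k\<in>{..<n}. A i k \<otimes> B k j)"
    by (simp add: Rn_def)
qed

lemma Rn_diag_mult:
  assumes A: "A \<in> carrier S" and B: "B \<in> carrier S" and i: "i < n"
  shows "(\<Oplus>k\<in>{..<n}. A i k \<otimes> B k i) = A i i \<otimes> B i i"
  by (rule finsum_eq_single) (use Rn_carrierD[OF A] Rn_carrierD[OF B] i in \<open>auto simp: neq_iff\<close>)

lemma Rn_mult_closed: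
  assumes A: "A \<in> carrier S" and B: "B \<in> carrier S"
  shows "A \<otimes>\<^bsub>S\<^esub> B \<in> carrier S"
  unfolding Rn_mult[OF A B]
proof (rule Rn_carrierI)
  note a = Rn_carrierD[OF A] and b = Rn_carrierD[OF B]
  fix i j
  show "(\<Oplus>k\<in>{..<n}. A i k \<otimes> B k j) \<in> carrier R"
    using a b by (simp add: Pi_def)
  show "(\<Oplus>k\<in>{..<n}. A i k \<otimes> B k j) = \<zero>" if "\<not> (i < n \<and> j < n)"
    by (rule add.finprod_one_eqI) (use that a b in auto)
  show "(\<Oplus>k\<in>{..<n}. A i k \<otimes> B k j) = \<zero>" if "j < i"
  proof (rule add.finprod_one_eqI)
    fix k
    show "A i k \<otimes> B k j = \<zero>"
      using that a(1)[of i k] b(1)[of k j] a(3)[of k i] b(3)[of j k] by (cases "k < i") auto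
  qed
next
  fix i assume i: "i < n"
  show "(\<Oplus>k\<in>{..<n}. A i k \<otimes> B k i) = (\<Oplus>k\<in>{..<n}. A 0 k \<otimes> B k 0)"
    using Rn_diag_mult[OF A B i] Rn_diag_mult[OF A B n_pos] Rn_diag[OF A i] Rn_diag[OF B i] by metis
qed

lemma Rn_add_closed:
  assumes A: "A \<in> carrier S" and B: "B \<in> carrier S"
  shows "A \<oplus>\<^bsub>S\<^esub> B \<in> carrier S"
  unfolding Rn_add[OF A B]
proof (rule Rn_carrierI)
  show "A i i \<oplus> B i i = A 0 0 \<oplus> B 0 0" if "i < n" for i
    by (simp only: Rn_diag[OF A that] Rn_diag[OF B that])
qed (use Rn_carrierD[OF A] Rn_carrierD[OF B] in simp_all)

lemma Rn_zero_closed: "\<zero>\<^bsub>S\<^esub> \<in> carrier S"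
  unfolding Rn_zero by (rule Rn_carrierI) simp_all

lemma Rn_one_closed: "\<one>\<^bsub>S\<^esub> \<in> carrier S"
  unfolding Rn_one by (rule Rn_carrierI) (auto simp: n_pos)

lemma Rn_neg:
  assumes A: "A \<in> carrier S"
  shows "\<exists>B\<in>carrier S. B \<oplus>\<^bsub>S\<^esub> A = \<zero>\<^bsub>S\<^esub>"
proof
  note a = Rn_carrierD[OF A]
  show B: "(\<lambda>i j. \<ominus> A i j) \<in> carrier S"
  proof (rule Rn_carrierI)
    show "\<ominus> A i i = \<ominus> A 0 0" if "i < n" for i
      by (simp only: Rn_diag[OF A that])
  qed (use a in simp_all)
  show "(\<lambda>i j. \<ominus> A i j) \<oplus>\<^bsub>S\<^esub> A = \<zero>\<^bsub>S\<^esub>"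
    unfolding Rn_add[OF B A] Rn_zero using a by (simp add: l_neg)
qed

lemma Rn_l_one:
  assumes A: "A \<in> carrier S"
  shows "\<one>\<^bsub>S\<^esub> \<otimes>\<^bsub>S\<^esub> A = A"
proof (intro ext)
  note a = Rn_carrierD[OF A]
  fix i j
  show "(\<one>\<^bsub>S\<^esub> \<otimes>\<^bsub>S\<^esub> A) i j = A i j"
  proof (cases "i < n")
    case True
    then show ?thesis unfolding Rn_mult[OF Rn_one_closed A]
      by (subst finsum_eq_single[of _ i]) (use a in \<open>auto simp: Rn_one\<close>)
  next
    case False
    then show ?thesis unfolding Rn_mult[OF Rn_one_closed A]
      by (subst add.finprod_one_eqI) (use a in \<open>auto simp: Rn_one\<close>)
  qed
qed

lemma Rn_r_one:
  assumes A: "A \<in> carrier S"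
  shows "A \<otimes>\<^bsub>S\<^esub> \<one>\<^bsub>S\<^esub> = A"
proof (intro ext)
  note a = Rn_carrierD[OF A]
  fix i j
  show "(A \<otimes>\<^bsub>S\<^esub> \<one>\<^bsub>S\<^esub>) i j = A i j"
  proof (cases "j < n")
    case True
    then show ?thesis unfolding Rn_mult[OF A Rn_one_closed]
      by (subst finsum_eq_single[of _ j]) (use a in \<open>auto simp: Rn_one\<close>)
  next
    case False
    then show ?thesis unfolding Rn_mult[OF A Rn_one_closed]
      by (subst add.finprod_one_eqI) (use a in \<open>auto simp: Rn_one\<close>)
  qed
qed

lemma Rn_mult_assoc:
  assumes A: "A \<in> carrier S" and B: "B \<in> carrier S" and C: "C \<in> carrier S"
  shows "(A \<otimes>\<^bsub>S\<^esub> B) \<otimes>\<^bsub>S\<^esub> C = A \<otimes>\<^bsub>S\<^esub> (B \<otimes>\<^bsub>S\<^esub> C)"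
proof (intro ext)
  note a = Rn_carrierD(1)[OF A] and b = Rn_carrierD(1)[OF B] and c = Rn_carrierD(1)[OF C]
  fix i j
  have "((A \<otimes>\<^bsub>S\<^esub> B) \<otimes>\<^bsub>S\<^esub> C) i j = (\<Oplus>k\<in>{..<n}. (\<Oplus>l\<in>{..<n}. A i l \<otimes> B l k) \<otimes> C k j)"
    unfolding Rn_mult[OF Rn_mult_closed[OF A B] C] unfolding Rn_mult[OF A B] ..
  also have "\<dots> = (\<Oplus>k\<in>{..<n}. \<Oplus>l\<in>{..<n}. A i l \<otimes> B l k \<otimes> C k j)"
    by (rule finsum_cong') (use a b c in \<open>auto simp: finsum_ldistr Pi_def\<close>)
  also have "\<dots> = (\<Oplus>l\<in>{..<n}. \<Oplus>k\<in>{..<n}. A i l \<otimes> B l k \<otimes> C k j)"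
    by (rule finsum_swap) (use a b c in auto)
  also have "\<dots> = (\<Oplus>l\<in>{..<n}. A i l \<otimes> (\<Oplus>k\<in>{..<n}. B l k \<otimes> C k j))"
    by (rule finsum_cong') (use a b c in \<open>auto simp: finsum_rdistr Pi_def m_assoc\<close>)
  also have "\<dots> = (A \<otimes>\<^bsub>S\<^esub> (B \<otimes>\<^bsub>S\<^esub> C)) i j"
    unfolding Rn_mult[OF A Rn_mult_closed[OF B C]] unfolding Rn_mult[OF B C] ..
  finally show "((A \<otimes>\<^bsub>S\<^esub> B) \<otimes>\<^bsub>S\<^esub> C) i j = (A \<otimes>\<^bsub>S\<^esub> (B \<otimes>\<^bsub>S\<^esub> C)) i j" .
qed

lemma Rn_l_distr:
  assumes A: "A \<in> carrier S" and B: "B \<in> carrier S" and C: "C \<in> carrier S"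
  shows "(A \<oplus>\<^bsub>S\<^esub> B) \<otimes>\<^bsub>S\<^esub> C = A \<otimes>\<^bsub>S\<^esub> C \<oplus>\<^bsub>S\<^esub> B \<otimes>\<^bsub>S\<^esub> C"
  unfolding Rn_mult[OF Rn_add_closed[OF A B] C] Rn_add[OF Rn_mult_closed[OF A C] Rn_mult_closed[OF B C]]
  unfolding Rn_mult[OF A C] Rn_mult[OF B C] Rn_add[OF A B]
  using Rn_carrierD(1)[OF A] Rn_carrierD(1)[OF B] Rn_carrierD(1)[OF C]
  by (simp add: l_distr finsum_addf Pi_def)

lemma Rn_r_distr:
  assumes A: "A \<in> carrier S" and B: "B \<in> carrier S" and C: "C \<in> carrier S"
  shows "C \<otimes>\<^bsub>S\<^esub> (A \<oplus>\<^bsub>S\<^esub> B) = C \<otimes>\<^bsub>S\<^esub> A \<oplus>\<^bsub>S\<^esub> C \<otimes>\<^bsub>S\<^esub> B"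
  unfolding Rn_mult[OF C Rn_add_closed[OF A B]] Rn_add[OF Rn_mult_closed[OF C A] Rn_mult_closed[OF C B]]
  unfolding Rn_mult[OF C A] Rn_mult[OF C B] Rn_add[OF A B]
  using Rn_carrierD(1)[OF A] Rn_carrierD(1)[OF B] Rn_carrierD(1)[OF C]
  by (simp add: r_distr finsum_addf Pi_def)

lemma Rn_is_ring: "ring S"
proof (rule ringI)
  show "abelian_group S"
  proof (rule abelian_groupI)
    fix A B C assume A: "A \<in> carrier S" and B: "B \<in> carrier S" and C: "C \<in> carrier S"
    show "A \<oplus>\<^bsub>S\<^esub> B \<oplus>\<^bsub>S\<^esub> C = A \<oplus>\<^bsub>S\<^esub> (B \<oplus>\<^bsub>S\<^esub> C)"
      unfolding Rn_add[OF Rn_add_closed[OF A B] C] Rn_add[OF A Rn_add_closed[OF B C]]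
      unfolding Rn_add[OF A B] Rn_add[OF B C]
      using Rn_carrierD(1)[OF A] Rn_carrierD(1)[OF B] Rn_carrierD(1)[OF C] by (simp add: a_assoc)
  next
    fix A B assume A: "A \<in> carrier S" and B: "B \<in> carrier S"
    show "A \<oplus>\<^bsub>S\<^esub> B = B \<oplus>\<^bsub>S\<^esub> A"
      unfolding Rn_add[OF A B] Rn_add[OF B A] using Rn_carrierD(1)[OF A] Rn_carrierD(1)[OF B] by (simp add: a_comm)
  next
    fix A assume A: "A \<in> carrier S"
    show "\<zero>\<^bsub>S\<^esub> \<oplus>\<^bsub>S\<^esub> A = A"
      unfolding Rn_add[OF Rn_zero_closed A] using Rn_carrierD(1)[OF A] by (simp add: Rn_zero)
  qed (auto intro: Rn_add_closed Rn_zero_closed Rn_neg)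
  show "monoid S"
    by (rule monoidI) (auto intro: Rn_mult_closed Rn_one_closed Rn_mult_assoc Rn_l_one Rn_r_one)
qed (auto intro: Rn_l_distr Rn_r_distr)

lemma Rn_diag_hom: "(\<lambda>A. A 0 0) \<in> ring_hom S R"
proof (rule ring_hom_memI)
  fix A B assume A: "A \<in> carrier S" and B: "B \<in> carrier S"
  show "(A \<otimes>\<^bsub>S\<^esub> B) 0 0 = A 0 0 \<otimes> B 0 0"
    unfolding Rn_mult[OF A B] by (rule Rn_diag_mult[OF A B n_pos])
  show "(A \<oplus>\<^bsub>S\<^esub> B) 0 0 = A 0 0 \<oplus> B 0 0"
    unfolding Rn_add[OF A B] ..
qed (simp_all add: Rn_carrierD Rn_one n_pos)

lemma Rn_diag_surj: "(\<lambda>A. A 0 0) ` carrier S = carrier R"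
proof (intro equalityI subsetI)
  fix r assume r: "r \<in> carrier R"
  have "(\<lambda>i j. if i < n \<and> j < n \<and> i = j then r else \<zero>) \<in> carrier S"
    by (rule Rn_carrierI) (use r n_pos in auto)
  then show "r \<in> (\<lambda>A. A 0 0) ` carrier S"
    by (rule rev_image_eqI) (simp add: n_pos)
qed (auto simp: Rn_carrierD)

lemma Rn_pow_entry_eq_zero:
  assumes A: "A \<in> carrier S" and A0: "A 0 0 = \<zero>"
  shows "j < i + m \<Longrightarrow> (A [^]\<^bsub>S\<^esub> (m::nat)) i j = \<zero>"
proof (induction m arbitrary: j)
  case 0
  then show ?case by (simp add: Rn_one)
next
  case (Suc m)
  interpret S: ring S by (rule Rn_is_ring)
  have P: "A [^]\<^bsub>S\<^esub> m \<in> carrier S" using A by simp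
  have "A k j = \<zero> \<or> (A [^]\<^bsub>S\<^esub> m) i k = \<zero>" if "k < n" for k
  proof (cases "k < i + m")
    case False
    then have "j < k \<or> j = k" using Suc.prems by linarith
    then show ?thesis using Rn_carrierD(3)[OF A] Rn_diag[OF A that] A0 by auto
  qed (simp add: Suc.IH)
  then have "(\<Oplus>k\<in>{..<n}. (A [^]\<^bsub>S\<^esub> m) i k \<otimes> A k j) = \<zero>"
    by (intro add.finprod_one_eqI) (use Rn_carrierD(1)[OF P] Rn_carrierD(1)[OF A] in fastforce)
  then show ?case by (simp add: Rn_mult[OF P A])
qed

lemma Rn_diag_kernel_nil: "a_kernel S R (\<lambda>A. A 0 0) \<subseteq> nilpotents S"
proof
  interpret S: ring S by (rule Rn_is_ring)
  fix A assume "A \<in> a_kernel S R (\<lambda>A. A 0 0)"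
  then have A: "A \<in> carrier S" and A0: "A 0 0 = \<zero>" by (auto simp: a_kernel_def')
  have "A [^]\<^bsub>S\<^esub> n = \<zero>\<^bsub>S\<^esub>"
  proof (intro ext)
    fix i j
    show "(A [^]\<^bsub>S\<^esub> n) i j = \<zero>\<^bsub>S\<^esub> i j"
      using Rn_pow_entry_eq_zero[OF A A0, of j i n] Rn_carrierD(2)[of "A [^]\<^bsub>S\<^esub> n" i j] A
      by (cases "i < n \<and> j < n") (auto simp: Rn_zero)
  qed
  then show "A \<in> nilpotents S" using A by (auto simp: nilpotents_def)
qed

lemma surjective_ring_hom_Rn_diag: "surjective_ring_hom S R (\<lambda>A. A 0 0)"
  by (intro surjective_ring_hom.intro ring_hom_ringI2 surjective_ring_hom_axioms.intro
      Rn_is_ring ring_axioms Rn_diag_hom Rn_diag_surj)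

end

theorem proposition2p25:
  fixes R :: "('a, 'b) ring_scheme" and n :: nat
  assumes "ring R" and "n \<ge> 1"
  shows "NJ_symmetric R \<longleftrightarrow> NJ_symmetric (Rn R n)"
proof -
  interpret Rn_matrices R n
    using assms by (simp add: Rn_matrices_def Rn_matrices_axioms_def)
  show ?thesis
    using surjective_ring_hom.NJ_symmetric_iff_of_nil_kernel[OF surjective_ring_hom_Rn_diag Rn_diag_kernel_nil]
    by simp
qed

end
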